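(* Consider a multi-layer perceptron with $L$ layers, where layer $\ell\in\{1,\ldots,L\}$ has weight matrix $W^{[\ell]}\in\mathbb{R}^{n^{[\ell]}\times n^{[\ell-1]}}$, bias $\theta^{[\ell]}\in\mathbb{R}^{n^{[\ell]}}$, and computes $y^{[\ell]}=f_\ell(W^{[\ell]}y^{[\ell-1]}+\theta^{[\ell]})$ with $f_\ell$ either the componentwise ReLU $z\mapsto\max(0,z)$ or the identity; $y^{[0]}=v^{[0]}$ is the network input and $g=f_L\circ\cdots$ denotes the resulting input-output map $v^{[0]}\mapsto y^{[L]}$. Let the input set be $\mathcal{V}^{[0]}=\bigcup_{s=1}^{N_0}\{v: H_s^{[0]}v\le b_s^{[0]}\}$. Define recursively $\mathcal{Y}^{[0]}=\mathcal{V}^{[0]}$ and, for $\ell=1,\ldots,L$ with $\mathcal{V}=\mathcal{Y}^{[\ell-1]}$, $W=W^{[\ell]}$, $\theta=\theta^{[\ell]}$, $n=n^{[\ell]}$: (i) if layer $\ell$ is linear, $\mathcal{Y}^{[\ell]}=\{Wv+\theta: v\in\mathcal{V}\}$; (ii) if layer $\ell$ is ReLU, $\mathcal{Y}^{[\ell]}=\bar{\mathcal{Y}}\cup\hat{\mathcal{Y}}\cup\bigcup_{m=1}^{2^n-2}\mathcal{Y}_m$, where $\bar{\mathcal{Y}}=\{0\}$ if $\{v\in\mathcal{V}: Wv+\theta\le 0\}\neq\emptyset$ and $\bar{\mathcal{Y}}=\emptyset$ otherwise; $\hat{\mathcal{Y}}=\{Wv+\theta: v\in\mathcal{V},\ Wv+\theta>0\}$;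 and $\mathcal{Y}_m=\{Q_m(Wv+\theta): v\in\mathcal{V},\ (I-Q_m)(Wv+\theta)\le0,\ Q_m(Wv+\theta)\ge 0\}$. Then the output reach set of the network satisfies $g(\mathcal{V}^{[0]})=\{g(v):v\in\mathcal{V}^{[0]}\}=\mathcal{Y}^{[L]}$.
   Context: Vector inequalities are componentwise ($>0$ means every component strictly positive). For a layer with $n$ neurons, $q_0,\ldots,q_{2^n-1}$ is an enumeration of $\{0,1\}^n$ with $q_0=(0,\ldots,0)$ and $q_{2^n-1}=(1,\ldots,1)$, and $Q_m=\mathrm{diag}(q_m)$; $I$ is the identity matrix. *)

theory Defs
  imports "Jordan_Normal_Form.Matrix"
begin

(* The library order on vec
   (v \<le> w) is componentwise with equal dimensions.  Componentwise STRICT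
   positivity is defined separately (the library '<' is the strict partial order). *)

definition vec_pos :: "real vec \<Rightarrow> bool" where
  "vec_pos v \<longleftrightarrow> (\<forall>i < dim_vec v. v $ i > 0)"

definition relu_vec :: "real vec \<Rightarrow> real vec" where
  "relu_vec z = map_vec (\<lambda>x. max 0 x) z"

definition diag_of_vec :: "real vec \<Rightarrow> real mat" where
  "diag_of_vec q = mat (dim_vec q) (dim_vec q) (\<lambda>(i,j). if i = j then q $ i else 0)"

definition binvecs :: "nat \<Rightarrow> real vec set" where
  "binvecs n = {q. dim_vec q = n \<and> (\<forall>i < n. q $ i = 0 \<or> q $ i = 1)}"

(* A layer: (weight matrix W, bias theta, is_relu).  is_relu = False means identity activation. *)
type_synonym layer = "real mat \<times> real vec \<times> bool"

definition layer_fun :: "layer \<Rightarrow> real vec \<Rightarrow> real vec" where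
  "layer_fun l v = (case l of (W, \<theta>, r) \<Rightarrow>
      (if r then relu_vec (W *\<^sub>v v + \<theta>) else W *\<^sub>v v + \<theta>))"

definition net_fun :: "layer list \<Rightarrow> real vec \<Rightarrow> real vec" where
  "net_fun ls v = fold layer_fun ls v"

definition reach_layer :: "layer \<Rightarrow> real vec set \<Rightarrow> real vec set" where
  "reach_layer l V = (case l of (W, \<theta>, r) \<Rightarrow>
     (let n = dim_row W in
      if \<not> r then {W *\<^sub>v v + \<theta> | v. v \<in> V}
      else
        (if {v \<in> V. W *\<^sub>v v + \<theta> \<le> 0\<^sub>v n} \<noteq> {} then {0\<^sub>v n} else {})
        \<union> {W *\<^sub>v v + \<theta> | v. v \<in> V \<and> vec_pos (W *\<^sub>v v + \<theta>)}
        \<union> (\<Union>q \<in> binvecs n - {0\<^sub>v n, vec n (\<lambda>_. 1)}.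
             {diag_of_vec q *\<^sub>v (W *\<^sub>v v + \<theta>) | v. v \<in> V
                \<and> (1\<^sub>m n - diag_of_vec q) *\<^sub>v (W *\<^sub>v v + \<theta>) \<le> 0\<^sub>v n
                \<and> diag_of_vec q *\<^sub>v (W *\<^sub>v v + \<theta>) \<ge> 0\<^sub>v n})))"

definition net_reach :: "layer list \<Rightarrow> real vec set \<Rightarrow> real vec set" where
  "net_reach ls V = fold reach_layer ls V"

(* layer dimensions: ns ! l = n^[l], l = 0..L *)
definition well_dimensioned :: "nat list \<Rightarrow> layer list \<Rightarrow> bool" where
  "well_dimensioned ns ls \<longleftrightarrow> length ns = length ls + 1 \<and>
     (\<forall>l < length ls. fst (ls ! l) \<in> carrier_mat (ns ! (l+1)) (ns ! l)
                    \<and> fst (snd (ls ! l)) \<in> carrier_vec (ns ! (l+1)))"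

end

theory Submission
  imports Defs
begin

(* For z = W v + theta, relu z = Q z where q is the indicator of the positive coordinates of z,
   and for a binary q the sign conditions (I - Q) z <= 0, Q z >= 0 hold exactly when
   Q z = relu z. So the patterns q = 0, q = 1 and the remaining q together describe the image of
   a ReLU layer exactly, and induction over the layers gives the reach set of the network. *)

lemma dim_diag_of_vec_mult_vec [simp]: "dim_vec (diag_of_vec q *\<^sub>v z) = dim_vec q"
  unfolding diag_of_vec_def by simp

lemma dim_diag_of_vec [simp]:
  "dim_row (diag_of_vec q) = dim_vec q" "dim_col (diag_of_vec q) = dim_vec q"
  unfolding diag_of_vec_def by simp_all

lemma diag_of_vec_carrier_mat: "diag_of_vec q \<in> carrier_mat (dim_vec q) (dim_vec q)"
  unfolding diag_of_vec_def by simp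

lemma diag_of_vec_mult_vec_nth:
  assumes "dim_vec q = dim_vec z" and "i < dim_vec z"
  shows "(diag_of_vec q *\<^sub>v z) $ i = q $ i * z $ i"
proof -
  have "(diag_of_vec q *\<^sub>v z) $ i = (\<Sum>j<dim_vec z. (if i = j then q $ i else 0) * z $ j)"
    using assms unfolding diag_of_vec_def by (simp add: scalar_prod_def row_def atLeast0LessThan)
  also have "\<dots> = (\<Sum>j<dim_vec z. (if i = j then q $ i * z $ j else 0))"
    by (rule sum.cong) auto
  also have "\<dots> = q $ i * z $ i"
    using assms(2) by simp
  finally show ?thesis .
qed

lemma one_minus_diag_of_vec_mult_vec:
  assumes "dim_vec q = n" and "dim_vec z = n"
  shows "(1\<^sub>m n - diag_of_vec q) *\<^sub>v z = z - diag_of_vec q *\<^sub>v z"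
proof -
  have "(1\<^sub>m n - diag_of_vec q) *\<^sub>v z = 1\<^sub>m n *\<^sub>v z - diag_of_vec q *\<^sub>v z"
    using assms diag_of_vec_carrier_mat[of q]
    by (simp add: minus_mult_distrib_mat_vec[OF one_carrier_mat _ carrier_vecI])
  then show ?thesis
    using one_mult_mat_vec[OF carrier_vecI[OF assms(2)]] by simp
qed

lemma diag_of_vec_sign_conditions_iff_relu:
  assumes "q \<in> binvecs n" and "dim_vec z = n"
  shows "((1\<^sub>m n - diag_of_vec q) *\<^sub>v z \<le> 0\<^sub>v n \<and> diag_of_vec q *\<^sub>v z \<ge> 0\<^sub>v n)
    \<longleftrightarrow> diag_of_vec q *\<^sub>v z = relu_vec z"
proof -
  have q: "dim_vec q = n" "\<And>i. i < n \<Longrightarrow> q $ i = 0 \<or> q $ i = 1"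
    using assms(1) by (auto simp: binvecs_def)
  have coord: "(z $ i \<le> q $ i * z $ i \<and> 0 \<le> q $ i * z $ i)
      \<longleftrightarrow> q $ i * z $ i = max 0 (z $ i)" if "i < n" for i
    using q(2)[OF that] by auto
  have "(1\<^sub>m n - diag_of_vec q) *\<^sub>v z \<le> 0\<^sub>v n \<longleftrightarrow> (\<forall>i<n. z $ i \<le> q $ i * z $ i)"
    using assms(2) q(1)
    by (simp add: one_minus_diag_of_vec_mult_vec diag_of_vec_mult_vec_nth less_eq_vec_def
        del: index_mult_mat_vec)
  moreover have "diag_of_vec q *\<^sub>v z \<ge> 0\<^sub>v n \<longleftrightarrow> (\<forall>i<n. 0 \<le> q $ i * z $ i)"
    using assms(2) q(1) by (simp add: diag_of_vec_mult_vec_nth less_eq_vec_def del: index_mult_mat_vec)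
  moreover have "diag_of_vec q *\<^sub>v z = relu_vec z \<longleftrightarrow> (\<forall>i<n. q $ i * z $ i = max 0 (z $ i))"
    using assms(2) q(1)
    by (simp add: diag_of_vec_mult_vec_nth vec_eq_iff relu_vec_def del: index_mult_mat_vec)
  ultimately show ?thesis
    using coord by blast
qed

definition activation_pattern :: "real vec \<Rightarrow> real vec" where
  "activation_pattern z = vec (dim_vec z) (\<lambda>i. if z $ i > 0 then 1 else 0)"

lemma activation_pattern_binvecs: "activation_pattern z \<in> binvecs (dim_vec z)"
  by (auto simp: activation_pattern_def binvecs_def)

lemma diag_of_activation_pattern_mult_vec:
  "diag_of_vec (activation_pattern z) *\<^sub>v z = relu_vec z"
  by (auto simp: vec_eq_iff diag_of_vec_mult_vec_nth activation_pattern_def relu_vec_def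
      simp del: index_mult_mat_vec)

lemma activation_pattern_eq_zero_iff:
  "activation_pattern z = 0\<^sub>v (dim_vec z) \<longleftrightarrow> z \<le> 0\<^sub>v (dim_vec z)"
  unfolding activation_pattern_def vec_eq_iff less_eq_vec_def by (simp add: not_less) (meson not_less)

lemma activation_pattern_eq_one_iff:
  "activation_pattern z = vec (dim_vec z) (\<lambda>_. 1) \<longleftrightarrow> vec_pos z"
  by (auto simp: activation_pattern_def vec_eq_iff vec_pos_def split: if_splits)

lemma relu_vec_nonpos: "z \<le> 0\<^sub>v n \<Longrightarrow> relu_vec z = 0\<^sub>v n"
  by (auto simp: relu_vec_def vec_eq_iff less_eq_vec_def)

lemma relu_vec_pos: "vec_pos z \<Longrightarrow> relu_vec z = z"
  by (auto simp: relu_vec_def vec_eq_iff vec_pos_def)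

lemma relu_image_eq_pattern_pieces:
  fixes f :: "'a \<Rightarrow> real vec"
  assumes dim: "\<And>v. v \<in> V \<Longrightarrow> dim_vec (f v) = n"
  shows "(\<lambda>v. relu_vec (f v)) ` V =
      (if {v \<in> V. f v \<le> 0\<^sub>v n} \<noteq> {} then {0\<^sub>v n} else {})
      \<union> {f v | v. v \<in> V \<and> vec_pos (f v)}
      \<union> (\<Union>q \<in> binvecs n - {0\<^sub>v n, vec n (\<lambda>_. 1)}.
           {diag_of_vec q *\<^sub>v f v | v. v \<in> V
              \<and> (1\<^sub>m n - diag_of_vec q) *\<^sub>v f v \<le> 0\<^sub>v n
              \<and> diag_of_vec q *\<^sub>v f v \<ge> 0\<^sub>v n})"
    (is "_ = ?Zero \<union> ?Pos \<union> ?Mixed")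
proof (intro equalityI subsetI)
  fix y assume "y \<in> (\<lambda>v. relu_vec (f v)) ` V"
  then obtain v where v: "v \<in> V" and y: "y = relu_vec (f v)"
    by blast
  define q where "q = activation_pattern (f v)"
  have q_bin: "q \<in> binvecs n" and q_relu: "diag_of_vec q *\<^sub>v f v = relu_vec (f v)"
    using activation_pattern_binvecs[of "f v"] diag_of_activation_pattern_mult_vec[of "f v"]
    by (simp_all add: q_def dim[OF v])
  consider "q = 0\<^sub>v n" | "q = vec n (\<lambda>_. 1)" | "q \<in> binvecs n - {0\<^sub>v n, vec n (\<lambda>_. 1)}"
    using q_bin by blast
  then show "y \<in> ?Zero \<union> ?Pos \<union> ?Mixed"
  proof cases
    case 1
    then have "f v \<le> 0\<^sub>v n"
      using activation_pattern_eq_zero_iff[of "f v"] by (simp add: q_def dim[OF v])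
    then show ?thesis
      using v y relu_vec_nonpos by auto
  next
    case 2
    then have "vec_pos (f v)"
      using activation_pattern_eq_one_iff[of "f v"] by (simp add: q_def dim[OF v])
    then show ?thesis
      using v y relu_vec_pos by auto
  next
    case 3
    have signs: "(1\<^sub>m n - diag_of_vec q) *\<^sub>v f v \<le> 0\<^sub>v n \<and> diag_of_vec q *\<^sub>v f v \<ge> 0\<^sub>v n"
      using q_relu diag_of_vec_sign_conditions_iff_relu[OF q_bin dim[OF v]] by simp
    have "y \<in> {diag_of_vec q *\<^sub>v f v | v. v \<in> V
        \<and> (1\<^sub>m n - diag_of_vec q) *\<^sub>v f v \<le> 0\<^sub>v n \<and> diag_of_vec q *\<^sub>v f v \<ge> 0\<^sub>v n}"
      unfolding y q_relu[symmetric] using v signs by blast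
    then show ?thesis
      using 3 by blast
  qed
next
  fix y assume "y \<in> ?Zero \<union> ?Pos \<union> ?Mixed"
  then consider v where "v \<in> V" "f v \<le> 0\<^sub>v n" "y = 0\<^sub>v n"
    | v where "v \<in> V" "vec_pos (f v)" "y = f v"
    | q v where "q \<in> binvecs n" "v \<in> V" "y = diag_of_vec q *\<^sub>v f v"
        "(1\<^sub>m n - diag_of_vec q) *\<^sub>v f v \<le> 0\<^sub>v n" "diag_of_vec q *\<^sub>v f v \<ge> 0\<^sub>v n"
    by (auto split: if_splits)
  then show "y \<in> (\<lambda>v. relu_vec (f v)) ` V"
  proof cases
    case (1 v)
    then show ?thesis
      using relu_vec_nonpos by (metis image_eqI)
  next
    case (2 v)
    then show ?thesis
      using relu_vec_pos by (metis image_eqI)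
  next
    case (3 q v)
    then show ?thesis
      using diag_of_vec_sign_conditions_iff_relu[OF 3(1) dim[OF 3(2)]] by auto
  qed
qed

lemma reach_layer_eq_image:
  assumes "dim_vec (fst (snd l)) = dim_row (fst l)"
  shows "reach_layer l V = layer_fun l ` V"
proof -
  obtain W \<theta> r where l: "l = (W, \<theta>, r)"
    by (cases l) auto
  have "dim_vec (W *\<^sub>v v + \<theta>) = dim_row W" for v
    using assms by (simp add: l)
  then show ?thesis
    using relu_image_eq_pattern_pieces[of V "\<lambda>v. W *\<^sub>v v + \<theta>" "dim_row W"]
    by (cases r) (auto simp: reach_layer_def layer_fun_def l Let_def)
qed

lemma net_reach_eq_image:
  assumes "\<forall>l \<in> set ls. dim_vec (fst (snd l)) = dim_row (fst l)"
  shows "net_reach ls V = net_fun ls ` V"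
  using assms
proof (induction ls arbitrary: V)
  case Nil
  then show ?case
    by (simp add: net_reach_def net_fun_def)
next
  case (Cons l ls)
  have "net_reach (l # ls) V = net_reach ls (layer_fun l ` V)"
    using reach_layer_eq_image Cons.prems by (simp add: net_reach_def)
  also have "\<dots> = net_fun ls ` layer_fun l ` V"
    using Cons by simp
  finally show ?case
    by (simp add: net_fun_def image_image)
qed

lemma well_dimensioned_bias_dim:
  assumes "well_dimensioned ns ls" and "l \<in> set ls"
  shows "dim_vec (fst (snd l)) = dim_row (fst l)"
proof -
  obtain k where "k < length ls" and "l = ls ! k"
    using assms(2) by (metis in_set_conv_nth)
  then show ?thesis
    using assms(1) unfolding well_dimensioned_def by auto
qed

theorem proposition1:
  fixes ns :: "nat list" and ls :: "layer list"
    and N0 :: nat and H :: "nat \<Rightarrow> real mat" and b :: "nat \<Rightarrow> real vec"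
    and V0 :: "real vec set"
  assumes "well_dimensioned ns ls"
    and "\<forall>s \<in> {1..N0}. H s \<in> carrier_mat (dim_vec (b s)) (ns ! 0)"
    and "V0 = (\<Union>s \<in> {1..N0}. {v \<in> carrier_vec (ns ! 0). H s *\<^sub>v v \<le> b s})"
  shows "net_fun ls ` V0 = net_reach ls V0"
  using net_reach_eq_image well_dimensioned_bias_dim[OF assms(1)] by simp

end
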